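(* Let $X$ be a set and let $\mathcal{L}\subset\mathcal{P}(X)$ be a nest (for every $M,N\in\mathcal{L}$, either $M\subset N$ or $N\subset M$). Suppose that for each $L\in\mathcal{L}$ there exists $\sup L$ with respect to $\trianglelefteq_{\mathcal{L}}$ and $\sup L\in X-L$. Then: 1. $L=X-\uparrow{k}$, where $k=\sup L$ with respect to $\triangleleft_{\mathcal{L}}$, for each $L\in\mathcal{L}$. 2. $\mathcal{T}_{\mathcal{L}}\subset\mathcal{T}_l$.
   Context: For a nest $\mathcal{L}$ on $X$, $x\triangleleft_{\mathcal{L}} y$ iff there exists $L\in\mathcal{L}$ with $x\in L$ and $y\notin L$; $\trianglelefteq_{\mathcal{L}}$ is its reflexive version. For $k\in X$, $\uparrow{k}$ is the set of $y\in X$ with $k\trianglelefteq_{\mathcal{L}} y$. $\mathcal{T}_{\mathcal{L}}$ is the topology on $X$ generated by $\mathcal{L}$ (as a subbase), and $\mathcal{T}_l$ is the lower topology on $X$, generated by the subbase $\{X-\uparrow{k}: k\in X\}$. *)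

theory Defs
  imports "HOL-Analysis.Analysis"
begin

definition is_nest :: "'a set set \<Rightarrow> bool" where
  "is_nest \<L> \<longleftrightarrow> (\<forall>M\<in>\<L>. \<forall>N\<in>\<L>. M \<subseteq> N \<or> N \<subseteq> M)"

definition nest_less :: "'a set set \<Rightarrow> 'a \<Rightarrow> 'a \<Rightarrow> bool" where
  "nest_less \<L> x y \<longleftrightarrow> (\<exists>L\<in>\<L>. x \<in> L \<and> y \<notin> L)"

definition nest_le :: "'a set set \<Rightarrow> 'a \<Rightarrow> 'a \<Rightarrow> bool" where
  "nest_le \<L> x y \<longleftrightarrow> x = y \<or> nest_less \<L> x y"

definition nest_up :: "'a set \<Rightarrow> 'a set set \<Rightarrow> 'a \<Rightarrow> 'a set" where
  "nest_up X \<L> k = {y \<in> X. nest_le \<L> k y}"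

definition nest_is_sup :: "'a set \<Rightarrow> 'a set set \<Rightarrow> 'a set \<Rightarrow> 'a \<Rightarrow> bool" where
  "nest_is_sup X \<L> A k \<longleftrightarrow>
     k \<in> X \<and> (\<forall>a\<in>A. nest_le \<L> a k) \<and>
     (\<forall>k'\<in>X. (\<forall>a\<in>A. nest_le \<L> a k') \<longrightarrow> nest_le \<L> k k')"

definition subbase_topology :: "'a set \<Rightarrow> 'a set set \<Rightarrow> 'a topology" where
  "subbase_topology X S = topology_generated_by (insert X S)"

definition nest_topology :: "'a set \<Rightarrow> 'a set set \<Rightarrow> 'a topology" where
  "nest_topology X \<L> = subbase_topology X \<L>"

definition lower_topology :: "'a set \<Rightarrow> 'a set set \<Rightarrow> 'a topology" where
  "lower_topology X \<L> = subbase_topology X {X - nest_up X \<L> k | k. k \<in> X}"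

end

theory Submission
  imports Defs
begin

(* Since sup L lies outside L but above every element of L, an element y of X lies in L
   exactly when sup L is not below y: elements of L are strictly below sup L, and any y
   outside L is an upper bound of L, hence above sup L.  So every member of the nest is a
   subbasic open set X - \<up>k of the lower topology, and the inclusion of topologies follows
   by monotonicity of generated topologies. *)

lemma generate_topology_on_mono:
  assumes "generate_topology_on \<S> U" "\<S> \<subseteq> \<T>"
  shows "generate_topology_on \<T> U"
  using assms by induction (auto intro: generate_topology_on.intros)

lemma openin_subbase_topology_mono:
  assumes "openin (subbase_topology X \<S>) U" "\<S> \<subseteq> \<T>"
  shows "openin (subbase_topology X \<T>) U"
proof -
  have "insert X \<S> \<subseteq> insert X \<T>" using assms(2) by blast
  with assms(1) show ?thesis
    unfolding subbase_topology_def openin_topology_generated_by_iff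
    by (rule generate_topology_on_mono)
qed

lemma nest_le_antisym:
  assumes "is_nest \<L>" "nest_le \<L> x y" "nest_le \<L> y x"
  shows "x = y"
  using assms unfolding is_nest_def nest_le_def nest_less_def by blast

lemma nest_is_sup_unique:
  assumes "is_nest \<L>" "nest_is_sup X \<L> A k" "nest_is_sup X \<L> A k'"
  shows "k = k'"
proof (rule nest_le_antisym[OF assms(1)])
  show "nest_le \<L> k k'" "nest_le \<L> k' k"
    using assms(2,3) unfolding nest_is_sup_def by blast+
qed

lemma nest_le_if_mem_notin:
  assumes "L \<in> \<L>" "x \<in> L" "y \<notin> L"
  shows "nest_le \<L> x y"
  using assms unfolding nest_le_def nest_less_def by blast

lemma nest_member_eq_compl_up:
  assumes "is_nest \<L>" "L \<in> \<L>" "L \<subseteq> X" "nest_is_sup X \<L> L k" "k \<notin> L"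
  shows "L = X - nest_up X \<L> k"
proof (intro equalityI subsetI)
  fix y assume y: "y \<in> L"
  then have "nest_le \<L> y k" using assms(4) unfolding nest_is_sup_def by blast
  moreover have "y \<noteq> k" using y assms(5) by blast
  ultimately have "\<not> nest_le \<L> k y" using nest_le_antisym[OF assms(1)] by blast
  then show "y \<in> X - nest_up X \<L> k" using y assms(3) unfolding nest_up_def by auto
next
  fix y assume y: "y \<in> X - nest_up X \<L> k"
  show "y \<in> L"
  proof (rule ccontr)
    assume "y \<notin> L"
    then have "\<forall>a\<in>L. nest_le \<L> a y" using nest_le_if_mem_notin[OF assms(2)] by blast
    then have "nest_le \<L> k y" using assms(4) y unfolding nest_is_sup_def by blast
    then show False using y unfolding nest_up_def by auto
  qed
qed

theorem proposition3p4:
  fixes X :: "'a set" and \<L> :: "'a set set"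
  assumes "\<L> \<subseteq> Pow X"
    and "is_nest \<L>"
    and "\<forall>L\<in>\<L>. \<exists>k. nest_is_sup X \<L> L k \<and> k \<in> X - L"
  shows "(\<forall>L\<in>\<L>. \<forall>k. nest_is_sup X \<L> L k \<longrightarrow> L = X - nest_up X \<L> k)
     \<and> (\<forall>U. openin (nest_topology X \<L>) U \<longrightarrow> openin (lower_topology X \<L>) U)"
proof -
  have compl_up: "L = X - nest_up X \<L> k" if "L \<in> \<L>" "nest_is_sup X \<L> L k" for L k
  proof -
    obtain k' where "nest_is_sup X \<L> L k'" "k' \<notin> L" using assms(3) \<open>L \<in> \<L>\<close> by blast
    then have "k \<notin> L" using nest_is_sup_unique[OF assms(2) that(2)] by blast
    moreover have "L \<subseteq> X" using assms(1) \<open>L \<in> \<L>\<close> by blast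
    ultimately show ?thesis using nest_member_eq_compl_up[OF assms(2) that(1)] that(2) by blast
  qed
  have nest_sub: "\<L> \<subseteq> {X - nest_up X \<L> k | k. k \<in> X}"
  proof
    fix L assume L: "L \<in> \<L>"
    then obtain k where "nest_is_sup X \<L> L k" "k \<in> X" using assms(3) by blast
    then show "L \<in> {X - nest_up X \<L> k | k. k \<in> X}" using compl_up L by blast
  qed
  have "openin (lower_topology X \<L>) U" if "openin (nest_topology X \<L>) U" for U
    using openin_subbase_topology_mono[OF that[unfolded nest_topology_def] nest_sub]
    unfolding lower_topology_def .
  with compl_up show ?thesis by blast
qed

end
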